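(* Let $p\ge q\ge 1$ be integers and $Q=\#^{p}-\#^{q}$. For $k\ge 1$ let $L(k)$ denote the maximal length of a binary word with exactly $k$ zeros that is not detected by $Q$. Then: (i) if $p\ge 2q+1$, then $L(k)=(k+1)p+q$ for all $k\ge1$; (ii) if $q\le p\le 2q+1$, then for all $\ell\ge 0$, $L(2\ell+1)=(\ell+2)p+(2\ell+1)q+\ell$, and for all $\ell\ge1$, $L(2\ell)=(\ell+1)p+(2\ell+1)q+\ell$. Consequently the $k$-critical length of $Q$ equals $L(k)+1$.
   Context: A seed is a finite word over $\{\#,-\}$ beginning and ending with $\#$ ($-$ is called a joker). A seed $Q$ of length $s$ matches a binary word $w$ at position $i$ ($1\le i\le |w|-s+1$) if $w[i+t-1]=1$ for every $t$ with $Q[t]=\#$; $Q$ detects $w$ if it matches $w$ at some position. The $k$-critical length of $Q$ is the minimal $m$ such that $Q$ detects every binary word of length $m$ with exactly $k$ zeros. *)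

theory Defs
  imports Main
begin

(* A seed is a list of booleans: True = '#', False = '-' (joker).
   A binary word is a list of booleans: True = 1, False = 0.
   Positions are 0-based here (position i corresponds to i+1 in the paper). *)

definition is_seed :: "bool list \<Rightarrow> bool" where
  "is_seed Q \<longleftrightarrow> Q \<noteq> [] \<and> hd Q \<and> last Q"

definition matches_at :: "bool list \<Rightarrow> bool list \<Rightarrow> nat \<Rightarrow> bool" where
  "matches_at Q w i \<longleftrightarrow> i + length Q \<le> length w \<and>
     (\<forall>t < length Q. Q ! t \<longrightarrow> w ! (i + t))"

definition detects :: "bool list \<Rightarrow> bool list \<Rightarrow> bool" where
  "detects Q w \<longleftrightarrow> (\<exists>i. matches_at Q w i)"

definition num_zeros :: "bool list \<Rightarrow> nat" where
  "num_zeros w = length (filter Not w)"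

definition max_undetected_len :: "bool list \<Rightarrow> nat \<Rightarrow> nat" where
  "max_undetected_len Q k =
     Max {length w | w. num_zeros w = k \<and> \<not> detects Q w}"

definition critical_length :: "bool list \<Rightarrow> nat \<Rightarrow> nat" where
  "critical_length Q k =
     (LEAST m. \<forall>w. length w \<ge> m \<longrightarrow> num_zeros w = k \<longrightarrow> detects Q w)"

definition seed_pq :: "nat \<Rightarrow> nat \<Rightarrow> bool list" where
  "seed_pq p q = replicate p True @ [False] @ replicate q True"

end

theory Submission
  imports Defs "HOL-Library.Sublist"
begin

(* Every word with k+1 zeros factors uniquely as u 0 1^a, cutting at its last zero.
   The key combinatorial fact (detects_append_block) is that Q detects u 0 1^a iff
   Q detects u, or 1^a alone contains a match (a >= p+q+1), or the joker of Q sits on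
   the new zero, i.e. u ends with 1^p and a >= q.  Hence the maximal lengths
     max_len k       of undetected words with k zeros, and
     max_len_open k  of those that moreover do not end with 1^p,
   obey a simple pair of recurrences in k.  Solving the recurrences in closed form in the two
   regimes p >= 2q+1 and p <= 2q+1 yields the theorem. *)

abbreviation ones :: "nat \<Rightarrow> bool list" where "ones n \<equiv> replicate n True"

lemma suffix_ones_iff:
  "suffix (ones p) u \<longleftrightarrow> p \<le> length u \<and> (\<forall>t<p. u ! (length u - p + t))"
proof
  assume "suffix (ones p) u"
  then obtain v where "u = v @ ones p" by (auto simp: suffix_def)
  then show "p \<le> length u \<and> (\<forall>t<p. u ! (length u - p + t))" by (simp add: nth_append)
next
  assume "p \<le> length u \<and> (\<forall>t<p. u ! (length u - p + t))"
  then have "drop (length u - p) u = ones p" by (intro nth_equalityI) auto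
  then show "suffix (ones p) u" by (metis suffix_drop)
qed

lemma suffix_ones_ones: "suffix (ones p) (ones n) \<longleftrightarrow> p \<le> n"
proof
  assume "suffix (ones p) (ones n)"
  then show "p \<le> n" using suffix_length_le by fastforce
next
  assume "p \<le> n"
  then have "ones n = ones (n - p) @ ones p" by (simp flip: replicate_add)
  then show "suffix (ones p) (ones n)" by (metis suffixI)
qed

lemma suffix_ones_block: "suffix (ones p) (u @ False # ones a) \<longleftrightarrow> p \<le> a"
proof
  assume sp: "suffix (ones p) (u @ False # ones a)"
  show "p \<le> a"
  proof (rule ccontr)
    assume "\<not> p \<le> a"
    have "suffix (False # ones a) (u @ False # ones a)" by (rule suffixI) simp
    with sp have "suffix (False # ones a) (ones p)"
      using \<open>\<not> p \<le> a\<close> suffix_length_suffix by fastforce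
    then show False using set_mono_suffix by fastforce
  qed
next
  assume "p \<le> a"
  then show "suffix (ones p) (u @ False # ones a)"
    using suffix_ones_ones suffix_appendI suffix_ConsI by metis
qed

lemma matches_at_append_left:
  "i + length Q \<le> length u \<Longrightarrow> matches_at Q (u @ v) i \<longleftrightarrow> matches_at Q u i"
  by (auto simp: matches_at_def nth_append)

lemma matches_at_append_right:
  "matches_at Q (u @ v) (length u + i) \<longleftrightarrow> matches_at Q v i"
  by (auto simp: matches_at_def nth_append add.assoc)

lemma length_seed_pq [simp]: "length (seed_pq p q) = p + q + 1"
  by (simp add: seed_pq_def)

lemma matches_at_seed_pq:
  "matches_at (seed_pq p q) w i \<longleftrightarrow>
     i + (p + q + 1) \<le> length w \<and> (\<forall>t < p + q + 1. t \<noteq> p \<longrightarrow> w ! (i + t))"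
  by (auto simp: matches_at_def seed_pq_def nth_append)

lemma matches_at_seed_ones:
  "matches_at (seed_pq p q) (ones n) i \<longleftrightarrow> i + (p + q + 1) \<le> n"
  by (auto simp: matches_at_seed_pq)

lemma matches_at_seed_block:
  "matches_at (seed_pq p q) (ones p @ False # ones a) 0 \<longleftrightarrow> q \<le> a"
  by (auto simp: matches_at_seed_pq nth_append nth_Cons split: nat.split)

(* A match of Q covering the zero of u 0 1^a must put its joker on that zero; then
   u ends with 1^p and the final block has at least q ones. *)
lemma matches_across_zero:
  assumes m: "matches_at (seed_pq p q) (u @ False # ones a) i"
    and "i \<le> length u" and "length u < i + (p + q + 1)"
  shows "i + p = length u \<and> q \<le> a \<and> suffix (ones p) u"
proof -
  let ?w = "u @ False # ones a"
  have len: "i + (p + q + 1) \<le> length u + 1 + a"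
    and ones: "\<And>t. t < p + q + 1 \<Longrightarrow> t \<noteq> p \<Longrightarrow> ?w ! (i + t)"
    using m by (auto simp: matches_at_seed_pq)
  have "\<not> ?w ! (i + (length u - i))" using \<open>i \<le> length u\<close> by simp
  then have pos: "i + p = length u"
    using ones[of "length u - i"] assms(2,3) by fastforce
  have "\<forall>t<p. u ! (length u - p + t)"
  proof (intro allI impI)
    fix t assume "t < p"
    then have "?w ! (i + t)" and "i + t < length u" using ones[of t] pos by auto
    moreover have "length u - p + t = i + t" using pos by simp
    ultimately show "u ! (length u - p + t)" by (simp add: nth_append)
  qed
  then show ?thesis using pos len by (auto simp: suffix_ones_iff)
qed

lemma detects_append_block:
  "detects (seed_pq p q) (u @ False # ones a) \<longleftrightarrow>
     detects (seed_pq p q) u \<or> p + q + 1 \<le> a \<or> (q \<le> a \<and> suffix (ones p) u)"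
  (is "detects ?Q ?w \<longleftrightarrow> ?rhs")
proof
  assume "detects ?Q ?w"
  then obtain i where m: "matches_at ?Q ?w i" by (auto simp: detects_def)
  consider (inside) "i + (p + q + 1) \<le> length u" | (after) "length u < i"
    | (across) "i \<le> length u" "length u < i + (p + q + 1)" by linarith
  then show ?rhs
  proof cases
    case inside
    then have "matches_at ?Q u i" using m matches_at_append_left[of i ?Q u] by simp
    then show ?thesis by (auto simp: detects_def)
  next
    case after
    then have "?w = (u @ [False]) @ ones a" and "i = length (u @ [False]) + (i - length u - 1)"
      by auto
    then have "matches_at ?Q (ones a) (i - length u - 1)"
      using m matches_at_append_right by metis
    then show ?thesis by (simp add: matches_at_seed_ones)
  next
    case across
    then show ?thesis using matches_across_zero[OF m] by simp
  qed
next
  assume ?rhs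
  then consider (left) "detects ?Q u" | (right) "p + q + 1 \<le> a"
    | (across) "q \<le> a" "suffix (ones p) u" by blast
  then show "detects ?Q ?w"
  proof cases
    case left
    then obtain i where "matches_at ?Q u i" by (auto simp: detects_def)
    then have "matches_at ?Q ?w i" using matches_at_append_left
      by (metis matches_at_def)
    then show ?thesis by (auto simp: detects_def)
  next
    case right
    then have "matches_at ?Q ((u @ [False]) @ ones a) (length (u @ [False]) + 0)"
      unfolding matches_at_append_right by (simp add: matches_at_seed_ones)
    then show ?thesis by (auto simp: detects_def)
  next
    case across
    then obtain v where "u = v @ ones p" by (auto simp: suffix_def)
    then have "matches_at ?Q (v @ ones p @ False # ones a) (length v + 0)"
      unfolding matches_at_append_right using across by (simp add: matches_at_seed_block)
    then show ?thesis using \<open>u = v @ ones p\<close> by (auto simp: detects_def)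
  qed
qed

lemma num_zeros_append_block [simp]: "num_zeros (u @ False # ones a) = Suc (num_zeros u)"
  by (simp add: num_zeros_def)

lemma num_zeros_ones [simp]: "num_zeros (ones n) = 0"
  by (simp add: num_zeros_def)

lemma num_zeros_0_ones: "num_zeros w = 0 \<Longrightarrow> w = ones (length w)"
  by (simp add: num_zeros_def filter_empty_conv replicate_length_same)

lemma last_zero_decomposition:
  assumes "num_zeros w = Suc k"
  obtains u a where "w = u @ False # ones a" and "num_zeros u = k"
proof -
  have "filter Not w \<noteq> []" using assms by (auto simp: num_zeros_def)
  then have "\<exists>x\<in>set w. \<not> x" by (simp add: filter_empty_conv)
  then obtain u zs where w: "w = u @ False # zs" and "\<forall>z\<in>set zs. z"
    using split_list_last_prop[of w Not] by blast
  then have "ones (length zs) = zs" by (simp add: replicate_length_same)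
  then have w': "w = u @ False # ones (length zs)" using w by simp
  then have "num_zeros u = k" using assms by simp
  with w' show ?thesis by (rule that)
qed

(* The recurrences for the maximal length of an undetected word with k zeros (max_len)
   and of one that does not end with 1^p (max_len_open).  A word u 0 1^a stays undetected
   iff a <= p+q and, when a >= q, u does not end with 1^p; it ends with 1^p iff a >= p. *)
fun max_len :: "nat \<Rightarrow> nat \<Rightarrow> nat \<Rightarrow> nat"
and max_len_open :: "nat \<Rightarrow> nat \<Rightarrow> nat \<Rightarrow> nat" where
  "max_len p q 0 = p + q"
| "max_len p q (Suc k) = max (max_len_open p q k + 1 + p + q) (max_len p q k + q)"
| "max_len_open p q 0 = p - 1"
| "max_len_open p q (Suc k) = max (max_len_open p q k + p) (max_len p q k + q)"

lemma max_len_upper_bound: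
  assumes "num_zeros w = k" and "\<not> detects (seed_pq p q) w"
  shows "length w \<le> max_len p q k
    \<and> (\<not> suffix (ones p) w \<longrightarrow> length w \<le> max_len_open p q k)"
  using assms
proof (induction k arbitrary: w)
  case 0
  obtain n where w: "w = ones n" using num_zeros_0_ones[OF "0.prems"(1)] by blast
  have "\<not> matches_at (seed_pq p q) (ones n) 0" using "0.prems"(2) w by (auto simp: detects_def)
  then show ?case by (auto simp: w matches_at_seed_ones suffix_ones_ones)
next
  case (Suc k)
  obtain u a where w: "w = u @ False # ones a" and u: "num_zeros u = k"
    using last_zero_decomposition[OF Suc.prems(1)] .
  have undet: "\<not> detects (seed_pq p q) u" "a \<le> p + q" "q \<le> a \<longrightarrow> \<not> suffix (ones p) u"
    using Suc.prems(2) unfolding w detects_append_block by auto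
  have IH: "length u \<le> max_len p q k" "\<not> suffix (ones p) u \<longrightarrow> length u \<le> max_len_open p q k"
    using Suc.IH[OF u undet(1)] by auto
  have "\<not> suffix (ones p) w \<longleftrightarrow> a < p" by (simp add: w suffix_ones_block not_le)
  then show ?case using IH undet by (cases "q \<le> a") (auto simp: w)
qed

(* The bounds are attained: each term of the maxima is realised by appending 0 1^(p+q),
   0 1^(q-1) or 0 1^(p-1) to an extremal word with one zero fewer.  Here q >= 1 makes
   q-1 ones a legal choice below q, and q <= p keeps the resulting words open. *)
lemma max_len_attained:
  assumes "1 \<le> q" and "q \<le> p"
  shows "(\<exists>w. num_zeros w = k \<and> \<not> detects (seed_pq p q) w \<and> length w = max_len p q k)
    \<and> (\<exists>w. num_zeros w = k \<and> \<not> detects (seed_pq p q) w \<and> \<not> suffix (ones p) w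
          \<and> length w = max_len_open p q k)"
proof (induction k)
  case 0
  have undet: "\<not> detects (seed_pq p q) (ones n)" if "n \<le> p + q" for n
    using that by (auto simp: detects_def matches_at_seed_ones)
  have "\<not> detects (seed_pq p q) (ones (p - 1))" and "\<not> suffix (ones p) (ones (p - 1))"
    using assms undet[of "p - 1"] by (auto simp: suffix_ones_ones)
  then show ?case using undet[of "p + q"] by (metis length_replicate max_len.simps(1)
    max_len_open.simps(1) num_zeros_ones order_refl)
next
  case (Suc k)
  then obtain wt wm where
    wt: "num_zeros wt = k" "\<not> detects (seed_pq p q) wt" "length wt = max_len p q k" and
    wm: "num_zeros wm = k" "\<not> detects (seed_pq p q) wm" "\<not> suffix (ones p) wm"
        "length wm = max_len_open p q k"
    by blast
  define extend where "extend u a = u @ False # ones a" for u a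
  have undet: "\<not> detects (seed_pq p q) (extend wm (p + q))"
    "\<not> detects (seed_pq p q) (extend wt (q - 1))"
    "\<not> detects (seed_pq p q) (extend wm (p - 1))"
    unfolding extend_def using wt wm assms by (auto simp: detects_append_block)
  have open_: "\<not> suffix (ones p) (extend wt (q - 1))" "\<not> suffix (ones p) (extend wm (p - 1))"
    unfolding extend_def suffix_ones_block using assms by auto
  have len: "length (extend wm (p + q)) = max_len_open p q k + 1 + p + q"
    "length (extend wt (q - 1)) = max_len p q k + q"
    "length (extend wm (p - 1)) = max_len_open p q k + p"
    unfolding extend_def using wt wm assms by auto
  have zeros: "num_zeros (extend u a) = Suc k" if "num_zeros u = k" for u a
    unfolding extend_def using that by simp
  have "\<exists>w. num_zeros w = Suc k \<and> \<not> detects (seed_pq p q) w \<and> length w = max_len p q (Suc k)"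
  proof (cases "max_len_open p q k + 1 + p + q \<le> max_len p q k + q")
    case True
    then show ?thesis using undet(2) len(2) zeros[OF wt(1)] by (intro exI[of _ "extend wt (q - 1)"]) simp
  next
    case False
    then show ?thesis using undet(1) len(1) zeros[OF wm(1)] by (intro exI[of _ "extend wm (p + q)"]) simp
  qed
  moreover have "\<exists>w. num_zeros w = Suc k \<and> \<not> detects (seed_pq p q) w \<and> \<not> suffix (ones p) w
      \<and> length w = max_len_open p q (Suc k)"
  proof (cases "max_len_open p q k + p \<le> max_len p q k + q")
    case True
    then show ?thesis using undet(2) open_(1) len(2) zeros[OF wt(1)]
      by (intro exI[of _ "extend wt (q - 1)"]) simp
  next
    case False
    then show ?thesis using undet(3) open_(2) len(3) zeros[OF wm(1)]
      by (intro exI[of _ "extend wm (p - 1)"]) simp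
  qed
  ultimately show ?case by blast
qed

(* Closed form when p >= 2q+1: appending 0 1^(p+q) after an open word always wins. *)
lemma max_len_long_prefix:
  assumes "2 * q + 1 \<le> p"
  shows "max_len p q k = (k + 1) * p + q \<and> max_len_open p q k + 1 = (k + 1) * p"
  using assms by (induction k) (auto simp: max_def algebra_simps)

(* Closed form when q <= p <= 2q+1: the extremal words alternate between the two kinds of
   extension, so the formulas depend on the parity of the number of zeros. *)
lemma max_len_short_prefix:
  assumes "1 \<le> q" and "q \<le> p" and "p \<le> 2 * q + 1"
  shows "max_len_open p q (2 * l) + 1 = (l + 1) * p + 2 * l * q + l
    \<and> max_len p q (2 * l) = (l + 1) * p + (2 * l + 1) * q + l
    \<and> max_len_open p q (2 * l + 1) = (l + 1) * p + (2 * l + 2) * q + l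
    \<and> max_len p q (2 * l + 1) = (l + 2) * p + (2 * l + 1) * q + l"
proof (induction l)
  case 0
  then show ?case using assms by (auto simp: max_def)
next
  case (Suc l)
  have "2 * Suc l = Suc (2 * l + 1)" and "2 * Suc l + 1 = Suc (Suc (2 * l + 1))" by simp_all
  then show ?case using Suc.IH assms
    by (simp only: max_len.simps max_len_open.simps) (auto simp: max_def algebra_simps)
qed

lemma max_undetected_len_eq:
  assumes "1 \<le> q" and "q \<le> p"
  shows "max_undetected_len (seed_pq p q) k = max_len p q k"
  unfolding max_undetected_len_def
proof (rule Max_eqI)
  let ?S = "{length w |w. num_zeros w = k \<and> \<not> detects (seed_pq p q) w}"
  show bound: "\<And>y. y \<in> ?S \<Longrightarrow> y \<le> max_len p q k" using max_len_upper_bound by blast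
  then show "finite ?S" by (meson atMost_iff finite_atMost finite_subset subsetI)
  obtain w where "num_zeros w = k" "\<not> detects (seed_pq p q) w" "length w = max_len p q k"
    using max_len_attained[OF assms, of k] by blast
  then show "max_len p q k \<in> ?S" by force
qed

lemma critical_length_eq:
  assumes "1 \<le> q" and "q \<le> p"
  shows "critical_length (seed_pq p q) k = max_len p q k + 1"
  unfolding critical_length_def
proof (rule Least_equality)
  show "\<forall>w. max_len p q k + 1 \<le> length w \<longrightarrow> num_zeros w = k \<longrightarrow> detects (seed_pq p q) w"
    using max_len_upper_bound by fastforce
  fix m
  assume m: "\<forall>w. m \<le> length w \<longrightarrow> num_zeros w = k \<longrightarrow> detects (seed_pq p q) w"
  obtain w where "num_zeros w = k" "\<not> detects (seed_pq p q) w" "length w = max_len p q k"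
    using max_len_attained[OF assms, of k] by blast
  with m have "\<not> m \<le> length w" by blast
  with \<open>length w = max_len p q k\<close> show "max_len p q k + 1 \<le> m" by linarith
qed

theorem mainTheorem2:
  fixes p q :: nat
  assumes "1 \<le> q" and "q \<le> p"
  shows "(2 * q + 1 \<le> p \<longrightarrow>
            (\<forall>k\<ge>1. max_undetected_len (seed_pq p q) k = (k + 1) * p + q))
       \<and> (p \<le> 2 * q + 1 \<longrightarrow>
            (\<forall>l. max_undetected_len (seed_pq p q) (2 * l + 1)
                   = (l + 2) * p + (2 * l + 1) * q + l)
          \<and> (\<forall>l\<ge>1. max_undetected_len (seed_pq p q) (2 * l)
                   = (l + 1) * p + (2 * l + 1) * q + l))
       \<and> (\<forall>k\<ge>1. critical_length (seed_pq p q) k = max_undetected_len (seed_pq p q) k + 1)"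
  using max_undetected_len_eq[OF assms] critical_length_eq[OF assms]
    max_len_long_prefix max_len_short_prefix[OF assms]
  by (simp del: max_len.simps max_len_open.simps)

end
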